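(* Let $n,d,\ell\ge1$ be integers, $k$ an even positive integer, and $\mathcal{Q}$ a partition of $\mathcal{I}=\{(j,s): j\in[2\ell], s\in[d]\}$ with $|\mathcal{Q}|$ classes. For any $\mathcal{Q}$-valid collection $\{I_j\}_{j=1}^{2\ell}$ of tuples in $[n]^{kd/2}$, the number of collections $\{\sigma_j\}_{j=1}^{2\ell}$ of permutations in $\mathbb{S}_{kd/2}$ with $\mathrm{Par}(\{I_j\},\{\mathrm{id}\},\{\sigma_j\})=\mathcal{Q}$ is at most $$(kd/2)^{k|\mathcal{Q}|/2}\cdot\prod_{j=1}^{2\ell}\mathrm{hist}(I_j)!.$$
   Context: For a tuple $I=(i_1,\dots,i_q)\in[n]^q$, $\mathrm{hist}(I)=(\alpha_1,\dots,\alpha_n)$ where $\alpha_i$ is the number of times $i$ appears in $I$, and $\mathrm{hist}(I)!:=\prod_{i=1}^n\alpha_i!$ (with $0!=1$). For $\pi\in\mathbb{S}_q$ (permutations of $[q]$), $\pi(I):=(i_{\pi(1)},\dots,i_{\pi(q)})$. A tuple in $[n]^{kd/2}$ is viewed as a concatenation of $d$ consecutive blocks, each in $[n]^{k/2}$. Given $I_1,\dots,I_{2\ell}\in[n]^{kd/2}$ (indices modulo $2\ell$, $I_{2\ell+1}=I_1$) and $\pi_j,\sigma_j\in\mathbb{S}_{kd/2}$, let $A_{j,s}$ be the $s$-th block of $\pi_j(I_j)$ and $B_{j,s}$ the $s$-th block of $\sigma_j(I_{j+1})$. $\mathrm{Par}(\{I_j\},\{\pi_j\},\{\sigma_j\})$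 is the partition of $\mathcal{I}$ into classes of the relation $(j,s)\sim(j',s')$ iff $(A_{j,s},B_{j,s})=(A_{j',s'},B_{j',s'})$ or $(A_{j,s},B_{j,s})=(B_{j',s'},A_{j',s'})$. $\{\mathrm{id}\}$ means all $\pi_j$ equal the identity. A collection $\{I_j\}$ is called $\mathcal{Q}$-valid if there exist $\{\sigma_j\}$ with $\mathrm{Par}(\{I_j\},\{\mathrm{id}\},\{\sigma_j\})=\mathcal{Q}$. *)

theory Defs
  imports "HOL-Combinatorics.Permutations"
begin

(* Conventions: positions and indices are 0-based.
   j \<in> {0..<2l} indexes the tuples I_j, s \<in> {0..<d} indexes blocks,
   tuple entries range over [n] = {1..n}. Tuples are lists of length k*d/2. *)

definition hist_fact :: "nat \<Rightarrow> nat list \<Rightarrow> nat" where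
  "hist_fact n I = (\<Prod>i\<in>{1..n}. fact (count_list I i))"

definition block :: "nat \<Rightarrow> nat list \<Rightarrow> nat \<Rightarrow> nat list" where
  "block k L s = take (k div 2) (drop (s * (k div 2)) L)"

definition Idx :: "nat \<Rightarrow> nat \<Rightarrow> (nat \<times> nat) set" where
  "Idx l d = {0..<2*l} \<times> {0..<d}"

definition Ablk :: "nat \<Rightarrow> nat \<Rightarrow> (nat \<Rightarrow> nat list) \<Rightarrow> (nat \<Rightarrow> nat \<Rightarrow> nat) \<Rightarrow> nat \<Rightarrow> nat \<Rightarrow> nat list" where
  "Ablk k l I \<pi> j s = block k (permute_list (\<pi> j) (I j)) s"

definition Bblk :: "nat \<Rightarrow> nat \<Rightarrow> (nat \<Rightarrow> nat list) \<Rightarrow> (nat \<Rightarrow> nat \<Rightarrow> nat) \<Rightarrow> nat \<Rightarrow> nat \<Rightarrow> nat list" where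
  "Bblk k l I \<sigma> j s = block k (permute_list (\<sigma> j) (I ((j + 1) mod (2*l)))) s"

definition par_rel :: "nat \<Rightarrow> nat \<Rightarrow> nat \<Rightarrow> (nat \<Rightarrow> nat list) \<Rightarrow> (nat \<Rightarrow> nat \<Rightarrow> nat)
    \<Rightarrow> (nat \<Rightarrow> nat \<Rightarrow> nat) \<Rightarrow> ((nat \<times> nat) \<times> (nat \<times> nat)) set" where
  "par_rel k l d I \<pi> \<sigma> = {((j,s),(j',s')). (j,s) \<in> Idx l d \<and> (j',s') \<in> Idx l d \<and>
     ((Ablk k l I \<pi> j s, Bblk k l I \<sigma> j s) = (Ablk k l I \<pi> j' s', Bblk k l I \<sigma> j' s') \<or>
      (Ablk k l I \<pi> j s, Bblk k l I \<sigma> j s) = (Bblk k l I \<sigma> j' s', Ablk k l I \<pi> j' s'))}"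

definition Par :: "nat \<Rightarrow> nat \<Rightarrow> nat \<Rightarrow> (nat \<Rightarrow> nat list) \<Rightarrow> (nat \<Rightarrow> nat \<Rightarrow> nat)
    \<Rightarrow> (nat \<Rightarrow> nat \<Rightarrow> nat) \<Rightarrow> (nat \<times> nat) set set" where
  "Par k l d I \<pi> \<sigma> = Idx l d // par_rel k l d I \<pi> \<sigma>"

definition is_partition_of :: "'a set set \<Rightarrow> 'a set \<Rightarrow> bool" where
  "is_partition_of Q A \<longleftrightarrow> \<Union>Q = A \<and> {} \<notin> Q \<and>
     (\<forall>X\<in>Q. \<forall>Y\<in>Q. X \<noteq> Y \<longrightarrow> X \<inter> Y = {})"

definition perm_colls :: "nat \<Rightarrow> nat \<Rightarrow> (nat \<Rightarrow> nat \<Rightarrow> nat) set" where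
  "perm_colls q l = {\<sigma>. (\<forall>j<2*l. \<sigma> j permutes {0..<q}) \<and> (\<forall>j\<ge>2*l. \<sigma> j = id)}"

definition Q_valid :: "nat \<Rightarrow> nat \<Rightarrow> nat \<Rightarrow> (nat \<times> nat) set set \<Rightarrow> (nat \<Rightarrow> nat list) \<Rightarrow> bool" where
  "Q_valid k l d Q I \<longleftrightarrow> (\<exists>\<sigma>\<in>perm_colls (k*d div 2) l. Par k l d I (\<lambda>_. id) \<sigma> = Q)"

end

theory Submission
  imports Defs
begin

text \<open>Send an admissible \<open>\<sigma>\<close> to the B-blocks it produces at one chosen representative of each
  class of \<open>Q\<close>. Since \<open>\<pi> = id\<close>, the A-blocks do not depend on \<open>\<sigma>\<close>, and inside a class every
  pair (A, B) equals the representative's pair or its swap; so these B-blocks determine all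
  B-blocks, i.e.\ all words \<open>\<sigma>_j(I_{j+1})\<close>. Each representative B-block is a word of length k/2
  over the at most kd/2 letters of its tuple, so there are at most \<open>(kd/2)^(k|Q|/2)\<close> images.
  For fixed words, each \<open>\<sigma>_j\<close> ranges over a coset of the stabiliser of \<open>I_{j+1}\<close>, which has
  \<open>hist(I_{j+1})!\<close> elements; a cyclic shift of the index turns the product into the stated one.\<close>

definition positions :: "'a list \<Rightarrow> 'a \<Rightarrow> nat set" where
  "positions xs v = {i. i < length xs \<and> xs ! i = v}"

lemma card_positions: "card (positions xs v) = count_list xs v"
  unfolding positions_def count_list_eq_length_filter length_filter_conv_card by metis

lemma stabilizer_permutes_positions:
  assumes p: "p permutes {..<length xs}" and fix_xs: "permute_list p xs = xs"
  shows "(\<lambda>i. if i \<in> positions xs v then p i else i) permutes positions xs v"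
proof -
  have "p ` positions xs v \<subseteq> positions xs v"
  proof
    fix x assume "x \<in> p ` positions xs v"
    then obtain i where i: "i \<in> positions xs v" "x = p i" by auto
    have "xs ! p i = permute_list p xs ! i"
      using i permute_list_nth[OF p] unfolding positions_def by simp
    then show "x \<in> positions xs v"
      using i permutes_in_image[OF p] fix_xs unfolding positions_def by auto
  qed
  moreover have "inj_on p (positions xs v)"
    using permutes_inj[OF p] by (meson inj_on_subset subset_UNIV)
  ultimately have "bij_betw p (positions xs v) (positions xs v)"
    by (simp add: bij_betw_def endo_inj_surj positions_def)
  then have "bij_betw (\<lambda>i. if i \<in> positions xs v then p i else i) (positions xs v) (positions xs v)"
    by (rule bij_betw_cong[THEN iffD1, rotated]) auto
  then show ?thesis by (rule bij_imp_permutes) auto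
qed

lemma card_stabilizer_le:
  "card {p. p permutes {..<length xs} \<and> permute_list p xs = xs}
     \<le> (\<Prod>v\<in>set xs. fact (count_list xs v))"
proof -
  define St where "St = {p. p permutes {..<length xs} \<and> permute_list p xs = xs}"
  define T where "T = (\<Pi>\<^sub>E v\<in>set xs. {r. r permutes positions xs v})"
  define \<Phi> where "\<Phi> p = (\<lambda>v\<in>set xs. \<lambda>i. if i \<in> positions xs v then p i else i)" for p :: "nat \<Rightarrow> nat"
  have fin_positions: "finite (positions xs v)" for v
    unfolding positions_def by auto
  have "\<Phi> ` St \<subseteq> T"
  proof (rule image_subsetI)
    fix p assume "p \<in> St"
    then have "p permutes {..<length xs}" "permute_list p xs = xs" unfolding St_def by auto
    then show "\<Phi> p \<in> T"
      unfolding \<Phi>_def T_def by (simp add: stabilizer_permutes_positions)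
  qed
  moreover have "inj_on \<Phi> St"
  proof (rule inj_onI, rule ext)
    fix p1 p2 i assume p1: "p1 \<in> St" and p2: "p2 \<in> St" and eq: "\<Phi> p1 = \<Phi> p2"
    show "p1 i = p2 i"
    proof (cases "i < length xs")
      case True
      then have "xs ! i \<in> set xs" "i \<in> positions xs (xs ! i)"
        unfolding positions_def by auto
      moreover have "\<Phi> p1 (xs ! i) i = \<Phi> p2 (xs ! i) i" using eq by simp
      ultimately show ?thesis unfolding \<Phi>_def by simp
    next
      case False
      then have "i \<notin> {..<length xs}" by simp
      then show ?thesis using p1 p2 unfolding St_def by (metis (no_types, lifting) mem_Collect_eq permutes_not_in)
    qed
  qed
  moreover have "finite T"
    unfolding T_def by (rule finite_PiE) (auto intro: finite_permutations fin_positions)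
  ultimately have "card St \<le> card T"
    by (intro card_inj_on_le)
  also have "card T = (\<Prod>v\<in>set xs. fact (count_list xs v))"
    unfolding T_def by (simp add: card_PiE card_permutations fin_positions card_positions)
  finally show ?thesis unfolding St_def .
qed

lemma hist_fact_eq_prod_set:
  assumes "set xs \<subseteq> {1..n}"
  shows "hist_fact n xs = (\<Prod>v\<in>set xs. fact (count_list xs v))"
  unfolding hist_fact_def
  by (rule prod.mono_neutral_right) (use assms in auto)

lemma card_permute_list_fiber_le:
  "card {p. p permutes {..<length xs} \<and> permute_list p xs = ys}
     \<le> card {p. p permutes {..<length xs} \<and> permute_list p xs = xs}"
proof (cases "\<exists>p0. p0 permutes {..<length xs} \<and> permute_list p0 xs = ys")
  case False
  then have "{p. p permutes {..<length xs} \<and> permute_list p xs = ys} = {}" by blast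
  then show ?thesis by (metis card.empty le0)
next
  case True
  then obtain p0 where p0: "p0 permutes {..<length xs}" "permute_list p0 xs = ys" by blast
  have "(\<lambda>p. p \<circ> inv p0) ` {p. p permutes {..<length xs} \<and> permute_list p xs = ys}
          \<subseteq> {p. p permutes {..<length xs} \<and> permute_list p xs = xs}"
  proof (rule image_subsetI)
    fix p assume "p \<in> {p. p permutes {..<length xs} \<and> permute_list p xs = ys}"
    then have p: "p permutes {..<length xs}" and ys: "permute_list p xs = ys" by auto
    have "permute_list (p \<circ> inv p0) xs = permute_list (inv p0) (permute_list p0 xs)"
      using ys p0 by (simp add: permute_list_compose permutes_inv)
    also have "\<dots> = permute_list (p0 \<circ> inv p0) xs"
      by (simp add: permute_list_compose permutes_inv[OF p0(1)])
    finally have "permute_list (p \<circ> inv p0) xs = xs"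
      using p0(1) by (simp add: permutes_inv_o(1))
    moreover have "p \<circ> inv p0 permutes {..<length xs}"
      using p p0(1) by (simp add: permutes_compose permutes_inv)
    ultimately show "p \<circ> inv p0 \<in> {p. p permutes {..<length xs} \<and> permute_list p xs = xs}"
      by simp
  qed
  moreover have "inj_on (\<lambda>p. p \<circ> inv p0) {p. p permutes {..<length xs} \<and> permute_list p xs = ys}"
  proof (rule inj_onI)
    fix a b assume "a \<circ> inv p0 = b \<circ> inv p0"
    then have "a \<circ> inv p0 \<circ> p0 = b \<circ> inv p0 \<circ> p0" by simp
    then show "a = b" by (simp add: comp_assoc permutes_inv_o(2)[OF p0(1)])
  qed
  moreover have "finite {p. p permutes {..<length xs} \<and> permute_list p xs = xs}"
    by (rule finite_subset[OF _ finite_permutations[of "{..<length xs}"]]) auto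
  ultimately show ?thesis
    by (intro card_inj_on_le)
qed

lemma length_block:
  assumes "length xs = (k div 2) * d" "s < d"
  shows "length (block k xs s) = k div 2"
proof -
  have "Suc s * (k div 2) \<le> d * (k div 2)"
    using assms(2) by (intro mult_le_mono1) simp
  then show ?thesis
    using assms(1) unfolding block_def by (simp add: mult.commute)
qed

lemma set_block_subset: "set (block k xs s) \<subseteq> set xs"
  unfolding block_def by (meson set_drop_subset set_take_subset subset_trans)

lemma nth_block:
  assumes "j < k div 2" "s * (k div 2) + j < length xs"
  shows "block k xs s ! j = xs ! (s * (k div 2) + j)"
  using assms unfolding block_def by simp

lemma list_eq_if_blocks_eq:
  assumes "length xs = (k div 2) * d" "length ys = (k div 2) * d" "k div 2 > 0"
    and "\<And>s. s < d \<Longrightarrow> block k xs s = block k ys s"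
  shows "xs = ys"
proof (rule nth_equalityI)
  show "length xs = length ys" using assms by simp
  fix i assume i: "i < length xs"
  define m where "m = k div 2"
  have "i div m < d"
    using i assms(1) by (simp add: m_def less_mult_imp_div_less mult.commute)
  moreover have "i = i div m * m + i mod m" by simp
  moreover have "i mod m < m" using assms(3) by (simp add: m_def)
  ultimately show "xs ! i = ys ! i"
    using assms(4)[of "i div m"] nth_block[of "i mod m" k "i div m"] i assms(1,2)
    unfolding m_def[symmetric] by metis
qed

lemma prod_lessThan_rotate:
  fixes N :: nat
  assumes "N > 0"
  shows "(\<Prod>j<N. f ((j + 1) mod N)) = (\<Prod>j<N. f j)"
proof (rule prod.reindex_bij_witness[where i = "\<lambda>j. (j + N - 1) mod N" and j = "\<lambda>j. (j + 1) mod N"])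
  fix j assume "j \<in> {..<N}"
  then have "j + 1 < N \<or> j + 1 = N" by auto
  then show "(j + 1) mod N \<in> {..<N}" "(j + N - 1) mod N \<in> {..<N}"
    and "((j + 1) mod N + N - 1) mod N = j" "((j + N - 1) mod N + 1) mod N = j"
    using assms by (auto simp: mod_Suc_eq)
qed simp

lemma card_le_card_image_mult:
  assumes "\<And>y. y \<in> f ` A \<Longrightarrow> card {x \<in> A. f x = y} \<le> b"
  shows "card A \<le> card (f ` A) * b"
proof (cases "finite A")
  case True
  have "A = (\<Union>y\<in>f ` A. {x \<in> A. f x = y})" by auto
  then have "card A \<le> (\<Sum>y\<in>f ` A. card {x \<in> A. f x = y})"
    by (metis card_UN_le True finite_imageI)
  also have "\<dots> \<le> card (f ` A) * b"
    using sum_bounded_above[of "f ` A" _ b] assms by simp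
  finally show ?thesis .
qed simp

lemma card_permute_list_fiber_le_hist_fact:
  assumes "set xs \<subseteq> {1..n}"
  shows "card {p. p permutes {..<length xs} \<and> permute_list p xs = ys} \<le> hist_fact n xs"
  using card_permute_list_fiber_le[of xs ys] card_stabilizer_le[of xs]
    hist_fact_eq_prod_set[OF assms] by linarith

lemma card_perm_colls_fiber_le:
  assumes J: "\<And>j. j < 2*l \<Longrightarrow> length (J j) = q \<and> set (J j) \<subseteq> {1..n}"
    and S: "S \<subseteq> {\<sigma>\<in>perm_colls q l. \<forall>j<2*l. permute_list (\<sigma> j) (J j) = y j}"
  shows "card S \<le> (\<Prod>j<2*l. hist_fact n (J j))"
proof -
  define F where "F j = {p. p permutes {..<length (J j)} \<and> permute_list p (J j) = y j}" for j
  have "inj_on (\<lambda>\<sigma>. restrict \<sigma> {..<2*l}) S"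
  proof (rule inj_onI, rule ext)
    fix \<sigma>1 \<sigma>2 j assume "\<sigma>1 \<in> S" "\<sigma>2 \<in> S" "restrict \<sigma>1 {..<2*l} = restrict \<sigma>2 {..<2*l}"
    moreover have "\<sigma>1 \<in> perm_colls q l" "\<sigma>2 \<in> perm_colls q l"
      using S \<open>\<sigma>1 \<in> S\<close> \<open>\<sigma>2 \<in> S\<close> by auto
    ultimately show "\<sigma>1 j = \<sigma>2 j"
      unfolding perm_colls_def by (cases "j < 2*l") (auto dest: fun_cong[of _ _ j])
  qed
  moreover have "(\<lambda>\<sigma>. restrict \<sigma> {..<2*l}) ` S \<subseteq> (\<Pi>\<^sub>E j\<in>{..<2*l}. F j)"
    using J S unfolding F_def perm_colls_def by (auto simp: atLeast0LessThan)
  moreover have "finite (\<Pi>\<^sub>E j\<in>{..<2*l}. F j)"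
    unfolding F_def by (intro finite_PiE) (auto intro: finite_subset[OF _ finite_permutations])
  ultimately have "card S \<le> card (\<Pi>\<^sub>E j\<in>{..<2*l}. F j)"
    by (rule card_inj_on_le)
  also have "\<dots> = (\<Prod>j<2*l. card (F j))"
    by (simp add: card_PiE)
  also have "\<dots> \<le> (\<Prod>j<2*l. hist_fact n (J j))"
  proof (rule prod_mono)
    fix j assume "j \<in> {..<2*l}"
    then have "set (J j) \<subseteq> {1..n}" using J by auto
    then have "card (F j) \<le> hist_fact n (J j)"
      unfolding F_def by (rule card_permute_list_fiber_le_hist_fact)
    then show "0 \<le> card (F j) \<and> card (F j) \<le> hist_fact n (J j)" by simp
  qed
  finally show ?thesis .
qed

lemma par_rel_equiv: "equiv (Idx l d) (par_rel k l d I \<pi> \<sigma>)"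
  unfolding equiv_def refl_on_def sym_def trans_def par_rel_def by auto

lemma Bblk_eq_on_Par_class:
  assumes "Par k l d I \<pi> \<sigma>1 = Q" "Par k l d I \<pi> \<sigma>2 = Q" "C \<in> Q" "x \<in> C" "y \<in> C"
    and "Bblk k l I \<sigma>1 (fst x) (snd x) = Bblk k l I \<sigma>2 (fst x) (snd x)"
  shows "Bblk k l I \<sigma>1 (fst y) (snd y) = Bblk k l I \<sigma>2 (fst y) (snd y)"
proof -
  have "(x, y) \<in> par_rel k l d I \<pi> \<sigma>1" "(x, y) \<in> par_rel k l d I \<pi> \<sigma>2"
    using assms(1-5) in_quotient_imp_in_rel[OF par_rel_equiv] unfolding Par_def by auto
  then show ?thesis
    using assms(6) unfolding par_rel_def by auto
qed

definition rep_Bblks :: "nat \<Rightarrow> nat \<Rightarrow> (nat \<Rightarrow> nat list) \<Rightarrow> (nat \<times> nat) set set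
    \<Rightarrow> ((nat \<times> nat) set \<Rightarrow> nat \<times> nat) \<Rightarrow> (nat \<Rightarrow> nat \<Rightarrow> nat) \<Rightarrow> (nat \<times> nat) set \<Rightarrow> nat list" where
  "rep_Bblks k l I Q r \<sigma> = (\<lambda>C\<in>Q. Bblk k l I \<sigma> (fst (r C)) (snd (r C)))"

lemma card_rep_Bblks_image_le:
  assumes "finite Q" and r: "\<And>C. C \<in> Q \<Longrightarrow> r C \<in> Idx l d"
    and I: "\<And>j. j < 2*l \<Longrightarrow> length (I j) = k div 2 * d"
    and S: "S \<subseteq> perm_colls (k div 2 * d) l"
  shows "card (rep_Bblks k l I Q r ` S) \<le> (k div 2 * d) ^ (k div 2 * card Q)"
proof -
  define q where "q = k div 2 * d"
  define J where "J C = I ((fst (r C) + 1) mod (2*l))" for C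
  define W where "W C = {bs. set bs \<subseteq> set (J C) \<and> length bs = k div 2}" for C
  have J: "length (J C) = q" if "C \<in> Q" for C
    using r[OF that] I unfolding J_def q_def Idx_def by auto
  have "rep_Bblks k l I Q r ` S \<subseteq> (\<Pi>\<^sub>E C\<in>Q. W C)"
  proof (rule image_subsetI)
    fix \<sigma> assume "\<sigma> \<in> S"
    have "Bblk k l I \<sigma> (fst (r C)) (snd (r C)) \<in> W C" if C: "C \<in> Q" for C
    proof -
      have rC: "fst (r C) < 2*l" "snd (r C) < d" using r[OF C] unfolding Idx_def by auto
      have "\<sigma> (fst (r C)) permutes {..<length (J C)}"
        using \<open>\<sigma> \<in> S\<close> S J[OF C] rC unfolding perm_colls_def q_def by (auto simp: atLeast0LessThan)
      then have "set (Bblk k l I \<sigma> (fst (r C)) (snd (r C))) \<subseteq> set (J C)"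
        using set_block_subset unfolding Bblk_def J_def by (metis set_permute_list)
      moreover have "length (Bblk k l I \<sigma> (fst (r C)) (snd (r C))) = k div 2"
        unfolding Bblk_def using J[OF C] rC(2) unfolding J_def q_def
        by (intro length_block[where d = d]) simp_all
      ultimately show ?thesis unfolding W_def by simp
    qed
    then show "rep_Bblks k l I Q r \<sigma> \<in> (\<Pi>\<^sub>E C\<in>Q. W C)"
      unfolding rep_Bblks_def by simp
  qed
  moreover have "finite (\<Pi>\<^sub>E C\<in>Q. W C)"
    unfolding W_def using \<open>finite Q\<close> by (simp add: finite_PiE finite_lists_length_eq)
  ultimately have "card (rep_Bblks k l I Q r ` S) \<le> card (\<Pi>\<^sub>E C\<in>Q. W C)"
    by (rule card_mono[rotated])
  also have "\<dots> = (\<Prod>C\<in>Q. card (set (J C)) ^ (k div 2))"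
    unfolding W_def using \<open>finite Q\<close> by (simp add: card_PiE card_lists_length_eq)
  also have "\<dots> \<le> (\<Prod>C\<in>Q. q ^ (k div 2))"
  proof (rule prod_mono)
    fix C assume "C \<in> Q"
    then have "card (set (J C)) \<le> q" using J card_length by metis
    then show "0 \<le> card (set (J C)) ^ (k div 2) \<and> card (set (J C)) ^ (k div 2) \<le> q ^ (k div 2)"
      by (simp add: power_mono)
  qed
  also have "\<dots> = q ^ (k div 2 * card Q)"
    by (simp add: power_mult)
  finally show ?thesis unfolding q_def .
qed

lemma permute_list_eq_if_rep_Bblks_eq:
  assumes I: "\<And>j. j < 2*l \<Longrightarrow> length (I j) = k div 2 * d" and "k div 2 > 0"
    and r: "\<And>C. C \<in> Q \<Longrightarrow> r C \<in> C"
    and Par: "Par k l d I \<pi> \<sigma>1 = Q" "Par k l d I \<pi> \<sigma>2 = Q"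
    and eq: "rep_Bblks k l I Q r \<sigma>1 = rep_Bblks k l I Q r \<sigma>2"
    and "j < 2*l"
  shows "permute_list (\<sigma>1 j) (I ((j + 1) mod (2*l))) = permute_list (\<sigma>2 j) (I ((j + 1) mod (2*l)))"
proof (rule list_eq_if_blocks_eq[of _ k d])
  show "length (permute_list (\<sigma>1 j) (I ((j + 1) mod (2*l)))) = k div 2 * d"
    and "length (permute_list (\<sigma>2 j) (I ((j + 1) mod (2*l)))) = k div 2 * d"
    using I \<open>j < 2*l\<close> by simp_all
  fix s assume "s < d"
  then have "(j, s) \<in> Idx l d" using \<open>j < 2*l\<close> unfolding Idx_def by simp
  then have "(j, s) \<in> \<Union>Q"
    using Union_quotient[OF par_rel_equiv, of l d k I \<pi> \<sigma>1] Par(1) unfolding Par_def by simp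
  then obtain C where C: "C \<in> Q" "(j, s) \<in> C" by blast
  have "Bblk k l I \<sigma>1 (fst (r C)) (snd (r C)) = Bblk k l I \<sigma>2 (fst (r C)) (snd (r C))"
    using fun_cong[OF eq, of C] C(1) unfolding rep_Bblks_def by simp
  from Bblk_eq_on_Par_class[OF Par C(1) r[OF C(1)] C(2) this]
  show "block k (permute_list (\<sigma>1 j) (I ((j + 1) mod (2*l)))) s
      = block k (permute_list (\<sigma>2 j) (I ((j + 1) mod (2*l)))) s"
    unfolding Bblk_def by simp
qed (use assms(2) in simp)

lemma card_rep_Bblks_fiber_le:
  assumes I: "\<And>j. j < 2*l \<Longrightarrow> length (I j) = k div 2 * d \<and> set (I j) \<subseteq> {1..n}"
    and "k div 2 > 0" "l > 0"
    and r: "\<And>C. C \<in> Q \<Longrightarrow> r C \<in> C"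
    and Par0: "Par k l d I \<pi> \<sigma>0 = Q"
  shows "card {\<sigma>\<in>{\<sigma>\<in>perm_colls (k div 2 * d) l. Par k l d I \<pi> \<sigma> = Q}.
                rep_Bblks k l I Q r \<sigma> = rep_Bblks k l I Q r \<sigma>0}
           \<le> (\<Prod>j<2*l. hist_fact n (I j))"
proof -
  define J where "J j = I ((j + 1) mod (2*l))" for j
  have J: "length (J j) = k div 2 * d \<and> set (J j) \<subseteq> {1..n}" for j
    using I \<open>l > 0\<close> unfolding J_def by simp
  have "card {\<sigma>\<in>{\<sigma>\<in>perm_colls (k div 2 * d) l. Par k l d I \<pi> \<sigma> = Q}.
                rep_Bblks k l I Q r \<sigma> = rep_Bblks k l I Q r \<sigma>0}
          \<le> (\<Prod>j<2*l. hist_fact n (J j))"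
  proof (rule card_perm_colls_fiber_le[OF J], rule subsetI)
    fix \<sigma> assume "\<sigma> \<in> {\<sigma>\<in>{\<sigma>\<in>perm_colls (k div 2 * d) l. Par k l d I \<pi> \<sigma> = Q}.
                rep_Bblks k l I Q r \<sigma> = rep_Bblks k l I Q r \<sigma>0}"
    then have \<sigma>: "\<sigma> \<in> perm_colls (k div 2 * d) l" "Par k l d I \<pi> \<sigma> = Q"
        "rep_Bblks k l I Q r \<sigma> = rep_Bblks k l I Q r \<sigma>0" by auto
    have "permute_list (\<sigma> j) (J j) = permute_list (\<sigma>0 j) (J j)" if "j < 2*l" for j
      unfolding J_def
      by (rule permute_list_eq_if_rep_Bblks_eq[OF _ \<open>k div 2 > 0\<close> r \<sigma>(2) Par0 \<sigma>(3) that])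
        (use I in simp)
    with \<sigma>(1) show "\<sigma> \<in> {\<sigma>\<in>perm_colls (k div 2 * d) l.
        \<forall>j<2*l. permute_list (\<sigma> j) (J j) = permute_list (\<sigma>0 j) (J j)}" by simp
  qed
  also have "\<dots> = (\<Prod>j<2*l. hist_fact n (I j))"
    unfolding J_def using \<open>l > 0\<close> by (intro prod_lessThan_rotate) simp
  finally show ?thesis .
qed

theorem claim2:
  fixes n d l k :: nat and Q :: "(nat \<times> nat) set set" and I :: "nat \<Rightarrow> nat list"
  assumes "n \<ge> 1" and "d \<ge> 1" and "l \<ge> 1" and "k \<ge> 1" and "even k"
    and "is_partition_of Q (Idx l d)"
    and "\<forall>j<2*l. length (I j) = k*d div 2 \<and> set (I j) \<subseteq> {1..n}"
    and "Q_valid k l d Q I"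
  shows "card {\<sigma>\<in>perm_colls (k*d div 2) l. Par k l d I (\<lambda>_. id) \<sigma> = Q}
           \<le> (k*d div 2) ^ ((k div 2) * card Q) * (\<Prod>j<2*l. hist_fact n (I j))"
proof -
  have q: "k * d div 2 = k div 2 * d" and "k div 2 > 0" using \<open>k \<ge> 1\<close> \<open>even k\<close> by auto
  have I: "\<And>j. j < 2*l \<Longrightarrow> length (I j) = k div 2 * d \<and> set (I j) \<subseteq> {1..n}"
    using assms(7) q by simp
  have Q: "\<Union>Q = Idx l d" "{} \<notin> Q" using assms(6) unfolding is_partition_of_def by auto
  then have "finite Q" unfolding Idx_def by (metis finite_SigmaI finite_UnionD finite_atLeastLessThan)
  define r where "r C = (SOME x. x \<in> C)" for C :: "(nat \<times> nat) set"
  have r: "r C \<in> C" if "C \<in> Q" for C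
    using Q(2) that unfolding r_def by (metis ex_in_conv someI_ex)
  define S where "S = {\<sigma>\<in>perm_colls (k div 2 * d) l. Par k l d I (\<lambda>_. id) \<sigma> = Q}"
  have "card S \<le> card (rep_Bblks k l I Q r ` S) * (\<Prod>j<2*l. hist_fact n (I j))"
  proof (rule card_le_card_image_mult)
    fix z assume "z \<in> rep_Bblks k l I Q r ` S"
    then obtain \<sigma>0 where "\<sigma>0 \<in> S" and z: "z = rep_Bblks k l I Q r \<sigma>0" by blast
    have "card {\<sigma>\<in>S. rep_Bblks k l I Q r \<sigma> = rep_Bblks k l I Q r \<sigma>0} \<le> (\<Prod>j<2*l. hist_fact n (I j))"
      unfolding S_def
      by (rule card_rep_Bblks_fiber_le) (use I \<open>k div 2 > 0\<close> \<open>l \<ge> 1\<close> r \<open>\<sigma>0 \<in> S\<close> in \<open>auto simp: S_def\<close>)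
    then show "card {\<sigma>\<in>S. rep_Bblks k l I Q r \<sigma> = z} \<le> (\<Prod>j<2*l. hist_fact n (I j))"
      using z by simp
  qed
  also have "\<dots> \<le> (k div 2 * d) ^ (k div 2 * card Q) * (\<Prod>j<2*l. hist_fact n (I j))"
    using card_rep_Bblks_image_le[OF \<open>finite Q\<close>, of r l d I k S] r Q(1) I
    unfolding S_def by (intro mult_le_mono1) blast
  finally show ?thesis unfolding S_def q .
qed

end
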